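(* Let $X=\{x_j:j\in J\}\subset\mathbb{R}^2$ be finite with $n=|J|$, and suppose its $1$-centre $C$ is equidistant from all points of $X$. Then $C$ is the quadratic min-power centre of $X$ if and only if $C\in\mathrm{conv}(\mathcal{M})$.
   Context: The quadratic min-power centre is the unique minimiser of $P(s)=\sum_{i\in J}\|s-x_i\|^2+\max_{i\in J}\|s-x_i\|^2$. $C$ is the centre of the minimum enclosing circle of $X$. $\mathcal{M}=\{M_j:j\in J\}$ with $M_j=\frac{1}{n+1}\big(x_j+\sum_{i\in J}x_i\big)$. *)

theory Defs
  imports "HOL-Analysis.Analysis"
begin

definition max_sqdist :: "('j \<Rightarrow> real^2) \<Rightarrow> 'j set \<Rightarrow> real^2 \<Rightarrow> real" where
  "max_sqdist x J s = (MAX i\<in>J. (norm (s - x i))\<^sup>2)"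

definition qpower :: "('j \<Rightarrow> real^2) \<Rightarrow> 'j set \<Rightarrow> real^2 \<Rightarrow> real" where
  "qpower x J s = (\<Sum>i\<in>J. (norm (s - x i))\<^sup>2) + max_sqdist x J s"

definition is_qmin_power_centre :: "('j \<Rightarrow> real^2) \<Rightarrow> 'j set \<Rightarrow> real^2 \<Rightarrow> bool" where
  "is_qmin_power_centre x J c \<longleftrightarrow> (\<forall>s. qpower x J c \<le> qpower x J s)"

definition is_one_centre :: "('j \<Rightarrow> real^2) \<Rightarrow> 'j set \<Rightarrow> real^2 \<Rightarrow> bool" where
  "is_one_centre x J c \<longleftrightarrow> (\<forall>s. (MAX i\<in>J. dist c (x i)) \<le> (MAX i\<in>J. dist s (x i)))"

definition Mpt :: "('j \<Rightarrow> real^2) \<Rightarrow> 'j set \<Rightarrow> 'j \<Rightarrow> real^2" where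
  "Mpt x J j = (1 / (real (card J) + 1)) *\<^sub>R (x j + (\<Sum>i\<in>J. x i))"

end

theory Submission
  imports Defs
begin

text \<open>
  Write \<open>u = s - C\<close> and let \<open>r\<close> be the common distance from \<open>C\<close> to the points. Expanding
  every \<open>\<parallel>s - x\<^sub>j\<parallel>\<^sup>2\<close> around \<open>C\<close> gives
  \<open>P(s) = (n + 1) (\<parallel>u\<parallel>\<^sup>2 + r\<^sup>2 + 2 max\<^sub>j \<langle>u, C - M\<^sub>j\<rangle>)\<close>,
  so \<open>C\<close> minimises \<open>P\<close> iff \<open>\<parallel>u\<parallel>\<^sup>2 + 2 max\<^sub>j \<langle>u, C - M\<^sub>j\<rangle> \<ge> 0\<close> for all \<open>u\<close>.
  If \<open>C\<close> is a convex combination of the \<open>M\<^sub>j\<close>, the maximum is at least the corresponding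
  average, which is \<open>0\<close>. Otherwise a hyperplane separates \<open>C\<close> from the \<open>M\<^sub>j\<close>, making the
  maximum negative and linear along its normal, so a short step in that direction
  decreases \<open>P\<close>.
\<close>

lemma power2_norm_diff_through:
  fixes s c y :: "'a::real_inner"
  shows "(norm (s - y))\<^sup>2 = (norm (s - c))\<^sup>2 + 2 * inner (s - c) (c - y) + (norm (c - y))\<^sup>2"
  using dot_norm[of "s - c" "c - y"] by (simp add: algebra_simps)

lemma Max_inner_nonneg_if_in_convex_hull:
  fixes c :: "'a::real_inner"
  assumes "finite M" "M \<noteq> {}" "c \<in> convex hull M"
  shows "0 \<le> (MAX m\<in>M. inner u (c - m))"
proof (rule ccontr)
  assume "\<not> 0 \<le> (MAX m\<in>M. inner u (c - m))"
  then have "\<forall>m\<in>M. inner u (c - m) < 0"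
    using assms(1,2) by (simp add: not_le)
  then have "M \<subseteq> {y. inner u y > inner u c}"
    by (auto simp: inner_diff_right)
  then have "convex hull M \<subseteq> {y. inner u y > inner u c}"
    by (intro hull_minimal convex_halfspace_gt)
  then show False using assms(3) by auto
qed

lemma Max_inner_neg_if_notin_convex_hull:
  fixes c :: "'a::euclidean_space"
  assumes "finite M" "M \<noteq> {}" "c \<notin> convex hull M"
  obtains v where "(MAX m\<in>M. inner v (c - m)) < 0"
proof -
  have "closed (convex hull M)"
    using finite_imp_compact_convex_hull[OF assms(1)] by (rule compact_imp_closed)
  then obtain v b where "inner v c < b" "\<forall>y\<in>convex hull M. b < inner v y"
    using separating_hyperplane_closed_point[OF convex_convex_hull _ assms(3)] by blast
  then have "\<forall>m\<in>M. inner v (c - m) < 0"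
    using hull_inc[of _ M] by (fastforce simp: inner_diff_right)
  then show thesis
    using that assms(1,2) by simp
qed

lemma convex_hull_iff_quadratic_Max_inner_nonneg:
  fixes c :: "'a::euclidean_space"
  assumes "finite M" "M \<noteq> {}"
  shows "c \<in> convex hull M \<longleftrightarrow> (\<forall>s. 0 \<le> (norm (s - c))\<^sup>2 + 2 * (MAX m\<in>M. inner (s - c) (c - m)))"
proof
  assume "c \<in> convex hull M"
  then show "\<forall>s. 0 \<le> (norm (s - c))\<^sup>2 + 2 * (MAX m\<in>M. inner (s - c) (c - m))"
    using Max_inner_nonneg_if_in_convex_hull[OF assms] by (simp add: add_nonneg_nonneg)
next
  assume nonneg: "\<forall>s. 0 \<le> (norm (s - c))\<^sup>2 + 2 * (MAX m\<in>M. inner (s - c) (c - m))"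
  show "c \<in> convex hull M"
  proof (rule ccontr)
    assume "c \<notin> convex hull M"
    then obtain v where neg: "(MAX m\<in>M. inner v (c - m)) < 0"
      using Max_inner_neg_if_notin_convex_hull[OF assms] by blast
    define d where "d = - (MAX m\<in>M. inner v (c - m))"
    have "d > 0" using neg by (simp add: d_def)
    have "v \<noteq> 0" using neg assms(2) by (auto simp: image_constant_conv split: if_splits)
    define t where "t = d / (norm v)\<^sup>2"
    have "t > 0" using \<open>d > 0\<close> \<open>v \<noteq> 0\<close> by (simp add: t_def)
    \<comment> \<open>with this \<open>t\<close> the quadratic cost \<open>t d\<close> of the step \<open>t v\<close> is half its linear gain \<open>2 t d\<close>\<close>
    have "(MAX m\<in>M. inner (t *\<^sub>R v) (c - m)) \<le> - t * d"
    proof -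
      have "inner (t *\<^sub>R v) (c - m) \<le> - t * d" if "m \<in> M" for m
        using Max_ge[OF finite_imageI[OF assms(1)] imageI[OF that, of "\<lambda>m. inner v (c - m)"]]
          \<open>t > 0\<close> by (simp add: d_def)
      then show ?thesis using assms by simp
    qed
    moreover have "(norm (t *\<^sub>R v))\<^sup>2 = t * (t * (norm v)\<^sup>2)"
      using \<open>t > 0\<close> by (simp add: power2_eq_square)
    moreover have "t * (norm v)\<^sup>2 = d"
      using \<open>v \<noteq> 0\<close> by (simp add: t_def)
    ultimately have
      "(norm ((c + t *\<^sub>R v) - c))\<^sup>2 + 2 * (MAX m\<in>M. inner ((c + t *\<^sub>R v) - c) (c - m)) < 0"
      using mult_pos_pos[OF \<open>t > 0\<close> \<open>d > 0\<close>] by simp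
    then show False using nonneg by (meson not_le)
  qed
qed

lemma qpower_equidistant:
  fixes x :: "'j \<Rightarrow> real^2"
  assumes "finite J" "J \<noteq> {}" and equidist: "\<forall>j\<in>J. norm (c - x j) = r"
  shows "qpower x J s
    = (card J + 1) * ((norm (s - c))\<^sup>2 + r\<^sup>2 + 2 * (MAX j\<in>J. inner (s - c) (c - Mpt x J j)))"
proof -
  define n where "n = real (card J)"
  define u where "u = s - c"
  define g where "g j = inner u (c - x j)" for j
  define k where "k = inner u (n *\<^sub>R c - (\<Sum>i\<in>J. x i))"
  have each: "(norm (s - x j))\<^sup>2 = (norm u)\<^sup>2 + r\<^sup>2 + 2 * g j" if "j \<in> J" for j
    using power2_norm_diff_through[of s "x j" c] equidist that by (simp add: u_def g_def)
  have "(\<Sum>j\<in>J. (norm (s - x j))\<^sup>2) = (\<Sum>j\<in>J. (norm u)\<^sup>2 + r\<^sup>2 + 2 * g j)"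
    using each by simp
  also have "\<dots> = n * ((norm u)\<^sup>2 + r\<^sup>2) + 2 * k"
    by (simp add: n_def g_def k_def sum.distrib algebra_simps sum_distrib_left[symmetric]
        inner_sum_right[symmetric] sum_subtractf sum_constant_scaleR del: sum_constant)
  finally have sum_eq: "(\<Sum>j\<in>J. (norm (s - x j))\<^sup>2) = n * ((norm u)\<^sup>2 + r\<^sup>2) + 2 * k" .
  have "max_sqdist x J s = (MAX j\<in>J. (norm u)\<^sup>2 + r\<^sup>2 + 2 * g j)"
    unfolding max_sqdist_def using each by (simp cong: image_cong)
  also have "\<dots> = (norm u)\<^sup>2 + r\<^sup>2 + 2 * (MAX j\<in>J. g j)"
    using mono_Max_commute[of "\<lambda>y. (norm u)\<^sup>2 + r\<^sup>2 + 2 * y" "g ` J"] assms(1,2)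
    by (simp add: mono_def image_image)
  finally have max_eq: "max_sqdist x J s = (norm u)\<^sup>2 + r\<^sup>2 + 2 * (MAX j\<in>J. g j)" .
  have scaled_Mpt: "(n + 1) *\<^sub>R Mpt x J j = x j + (\<Sum>i\<in>J. x i)" for j
    by (simp add: Mpt_def n_def add_pos_nonneg)
  have "(n + 1) * inner u (c - Mpt x J j) = g j + k" for j
  proof -
    have "(n + 1) * inner u (c - Mpt x J j) = inner u ((n + 1) *\<^sub>R c - (n + 1) *\<^sub>R Mpt x J j)"
      by (simp add: inner_diff_right algebra_simps)
    also have "\<dots> = g j + k"
      unfolding scaled_Mpt by (simp add: g_def k_def inner_diff_right inner_add_right algebra_simps)
    finally show ?thesis .
  qed
  then have "(n + 1) * (MAX j\<in>J. inner u (c - Mpt x J j)) = (MAX j\<in>J. g j) + k"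
    using mono_Max_commute[of "\<lambda>y. (n + 1) * y" "(\<lambda>j. inner u (c - Mpt x J j)) ` J"]
      Max_add_commute[of J g k] assms(1,2)
    by (simp add: mono_def n_def image_image)
  then show ?thesis
    using sum_eq max_eq by (simp add: qpower_def u_def n_def algebra_simps)
qed

theorem proposition3:
  fixes x :: "'j \<Rightarrow> real^2" and J :: "'j set" and C :: "real^2"
  assumes "finite J" and "J \<noteq> {}" and "inj_on x J"
    and "is_one_centre x J C"
    and "\<forall>i\<in>J. \<forall>k\<in>J. dist C (x i) = dist C (x k)"
  shows "is_qmin_power_centre x J C \<longleftrightarrow> C \<in> convex hull (Mpt x J ` J)"
proof -
  obtain i0 where "i0 \<in> J" using assms(2) by blast
  then have "\<forall>j\<in>J. norm (C - x j) = norm (C - x i0)"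
    using assms(5) by (metis dist_norm)
  note P = qpower_equidistant[OF assms(1,2) this]
  define D where "D s = (norm (s - C))\<^sup>2 + 2 * (MAX m\<in>Mpt x J ` J. inner (s - C) (C - m))" for s
  have "qpower x J s = (card J + 1) * ((norm (C - x i0))\<^sup>2 + D s)" for s
  proof -
    have "(MAX j\<in>J. inner (s - C) (C - Mpt x J j)) = (MAX m\<in>Mpt x J ` J. inner (s - C) (C - m))"
      by (simp add: image_image)
    then show ?thesis using P[of s] by (simp only: D_def add_ac)
  qed
  moreover have "D C = 0"
    using assms(2) by (simp add: D_def image_constant_conv)
  ultimately have "is_qmin_power_centre x J C \<longleftrightarrow> (\<forall>s. 0 \<le> D s)"
    by (simp add: is_qmin_power_centre_def)
  also have "\<dots> \<longleftrightarrow> C \<in> convex hull (Mpt x J ` J)"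
    unfolding D_def using convex_hull_iff_quadratic_Max_inner_nonneg assms(1,2)
    by (metis finite_imageI image_is_empty)
  finally show ?thesis .
qed

end
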